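(* Let $k \geq 0$ be an integer. (i) If $k \leq 6$, then $K_{m,m+k}$ is stable for all integers $m \geq 1$. (ii) If $k \geq 7$, then there exists an integer $N(k)$ such that $K_{m,m+k}$ is stable for all integers $m > N(k)$.
   Context: For a simple graph $G$, the independence polynomial is $i(G,x)=\sum_{k=0}^{\alpha(G)} i_k(G)x^k$, where $i_k(G)$ is the number of independent sets of size $k$ in $G$ (with $i_0(G)=1$) and $\alpha(G)$ is the independence number. A graph $G$ is called stable if every root $z$ of $i(G,x)$ satisfies $\mathrm{Re}(z)\leq 0$. $K_{a,b}$ denotes the complete bipartite graph with parts of sizes $a$ and $b$; its independence polynomial is $(1+x)^a+(1+x)^b-1$. *)

theory Defs
  imports Complex_Main "HOL-Computational_Algebra.Polynomial"
begin

definition simple_graph :: "'v set \<Rightarrow> ('v \<Rightarrow> 'v \<Rightarrow> bool) \<Rightarrow> bool" where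
  "simple_graph V E \<longleftrightarrow> finite V \<and> (\<forall>x y. E x y \<longrightarrow> E y x) \<and> (\<forall>x. \<not> E x x)"

definition indep_set :: "'v set \<Rightarrow> ('v \<Rightarrow> 'v \<Rightarrow> bool) \<Rightarrow> 'v set \<Rightarrow> bool" where
  "indep_set V E S \<longleftrightarrow> S \<subseteq> V \<and> (\<forall>x\<in>S. \<forall>y\<in>S. \<not> E x y)"

definition indep_poly :: "'v set \<Rightarrow> ('v \<Rightarrow> 'v \<Rightarrow> bool) \<Rightarrow> complex poly" where
  "indep_poly V E = (\<Sum>S\<in>{S. indep_set V E S}. monom 1 (card S))"

definition stable :: "'v set \<Rightarrow> ('v \<Rightarrow> 'v \<Rightarrow> bool) \<Rightarrow> bool" where
  "stable V E \<longleftrightarrow> (\<forall>z. poly (indep_poly V E) z = 0 \<longrightarrow> Re z \<le> 0)"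

definition Kbip_V :: "nat \<Rightarrow> nat \<Rightarrow> (nat + nat) set" where
  "Kbip_V a b = Inl ` {..<a} \<union> Inr ` {..<b}"

definition Kbip_E :: "nat + nat \<Rightarrow> nat + nat \<Rightarrow> bool" where
  "Kbip_E x y \<longleftrightarrow> (isl x \<noteq> isl y)"

end

theory Submission
  imports Defs
begin

text \<open>With w = 1 + z the independence polynomial (1+z)^m + (1+z)^(m+k) - 1 vanishes exactly
when w^m (1 + w^k) = 1, and Re z > 0 means Re w > 1.
For k \<le> 6 write w = a (1 + i t) with a > 1: replacing 1 + i t by w only increases |w| and
|1 + w^k|, so |w^m (1 + w^k)| \<ge> |1 + i t| |1 + (1 + i t)^k|, and the square of the right-hand
side exceeds 1 by an explicit polynomial inequality in t^2.
For a root with |w| = 1 + e, Bernoulli's inequality and |1 + w^k| \<ge> e give m e^2 < 1, whereas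
|1 + w^k| < 1 forces |w^k - 1| > 1, hence |w - 1| > 1/(3k) and e > 1/(27 k^2); the two bounds
are incompatible once m > 729 k^4.\<close>

lemma sum_Pow_power_card:
  fixes z :: "'a::comm_semiring_1"
  assumes "finite X"
  shows "(\<Sum>S\<in>Pow X. z ^ card S) = (1 + z) ^ card X"
  using prod_add[OF assms, of "\<lambda>_. z" "\<lambda>_. 1"] by (simp add: add.commute)

lemma indep_sets_Kbip:
  "{S. indep_set (Kbip_V a b) Kbip_E S} = Pow (Inl ` {..<a}) \<union> Pow (Inr ` {..<b})"
proof (intro equalityI subsetI)
  fix S assume "S \<in> {S. indep_set (Kbip_V a b) Kbip_E S}"
  then have sub: "S \<subseteq> Inl ` {..<a} \<union> Inr ` {..<b}" and same: "\<forall>x\<in>S. \<forall>y\<in>S. isl x = isl y"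
    unfolding mem_Collect_eq indep_set_def Kbip_E_def Kbip_V_def by blast+
  show "S \<in> Pow (Inl ` {..<a}) \<union> Pow (Inr ` {..<b})"
  proof (cases "\<exists>x\<in>S. isl x")
    case True
    with same sub have "S \<subseteq> Inl ` {..<a}" by fastforce
    then show ?thesis by blast
  next
    case False
    with sub have "S \<subseteq> Inr ` {..<b}" by fastforce
    then show ?thesis by blast
  qed
next
  fix S assume "S \<in> Pow (Inl ` {..<a}) \<union> Pow (Inr ` {..<b})"
  then show "S \<in> {S. indep_set (Kbip_V a b) Kbip_E S}"
    by (auto simp: indep_set_def Kbip_E_def Kbip_V_def)
qed

lemma poly_indep_poly_Kbip:
  "poly (indep_poly (Kbip_V a b) Kbip_E) z = (1 + z) ^ a + (1 + z) ^ b - 1"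
proof -
  let ?A = "Inl ` {..<a} :: (nat + nat) set" and ?B = "Inr ` {..<b} :: (nat + nat) set"
  have "poly (indep_poly (Kbip_V a b) Kbip_E) z = (\<Sum>S\<in>Pow ?A \<union> Pow ?B. z ^ card S)"
    unfolding indep_poly_def indep_sets_Kbip by (simp add: poly_sum poly_monom)
  also have "\<dots> = (\<Sum>S\<in>Pow ?A. z ^ card S) + (\<Sum>S\<in>Pow ?B. z ^ card S) - 1"
  proof -
    have "Pow ?A \<inter> Pow ?B = {{}}" by auto
    then show ?thesis
      using sum.union_inter[of "Pow ?A" "Pow ?B" "\<lambda>S. z ^ card S"] by (simp add: eq_diff_eq)
  qed
  also have "\<dots> = (1 + z) ^ a + (1 + z) ^ b - 1"
    by (simp add: sum_Pow_power_card card_image)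
  finally show ?thesis .
qed

lemma stable_Kbip_if_no_root:
  assumes "\<And>w. 1 < Re w \<Longrightarrow> w ^ m * (1 + w ^ k) \<noteq> 1"
  shows "stable (Kbip_V m (m + k)) Kbip_E"
  unfolding stable_def
proof (intro allI impI)
  fix z assume "poly (indep_poly (Kbip_V m (m + k)) Kbip_E) z = 0"
  then have "(1 + z) ^ m * (1 + (1 + z) ^ k) = 1"
    by (simp add: poly_indep_poly_Kbip power_add distrib_left)
  then show "Re z \<le> 0"
    using assms[of "1 + z"] by fastforce
qed

lemma norm_one_plus_square: "(cmod (1 + v))\<^sup>2 = 1 + 2 * Re v + (cmod v)\<^sup>2"
  unfolding cmod_power2 by (simp add: power2_eq_square algebra_simps)

lemma norm_one_plus_le_norm_one_plus_scaled:
  fixes v :: complex and s :: real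
  assumes "1 \<le> s" "1 \<le> cmod v"
  shows "cmod (1 + v) \<le> cmod (1 + of_real s * v)"
proof -
  have "2 * cmod v \<le> 2 * (cmod v)\<^sup>2"
    using assms(2) mult_left_mono[of 1 "cmod v" "cmod v"] by (simp add: power2_eq_square)
  also have "\<dots> \<le> (s + 1) * (cmod v)\<^sup>2"
    using assms(1) by (intro mult_right_mono) auto
  finally have "0 \<le> (s - 1) * (2 * Re v + (s + 1) * (cmod v)\<^sup>2)"
    using assms(1) abs_Re_le_cmod[of v] by (intro mult_nonneg_nonneg) auto
  also have "\<dots> = (cmod (1 + of_real s * v))\<^sup>2 - (cmod (1 + v))\<^sup>2"
    unfolding norm_one_plus_square by (simp add: norm_mult power_mult_distrib algebra_simps power2_eq_square)
  finally show ?thesis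
    by (simp add: power_mono_iff)
qed

lemma Re_Complex_one_power:
  "Re (Complex 1 t ^ 0) = 1"
  "Re (Complex 1 t ^ 1) = 1"
  "Re (Complex 1 t ^ 2) = 1 - t\<^sup>2"
  "Re (Complex 1 t ^ 3) = 1 - 3 * t\<^sup>2"
  "Re (Complex 1 t ^ 4) = 1 - 6 * t\<^sup>2 + (t\<^sup>2)\<^sup>2"
  "Re (Complex 1 t ^ 5) = 1 - 10 * t\<^sup>2 + 5 * (t\<^sup>2)\<^sup>2"
  "Re (Complex 1 t ^ 6) = 1 - 15 * t\<^sup>2 + 15 * (t\<^sup>2)\<^sup>2 - (t\<^sup>2) ^ 3"
  by (simp_all add: eval_nat_numeral algebra_simps)

text \<open>The k-th inequality is (1 + s) |1 + (1 + i t)^k|^2 > 1 for s = t^2, with Re ((1 + i t)^k)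
written literally as in Re_Complex_one_power, so that rewriting with it yields these terms.\<close>

lemma small_k_polynomials_gt_one:
  fixes s :: real
  assumes "0 \<le> s"
  shows "1 < (1 + s) * (1 + 2 * 1 + (1 + s) ^ 0)"
    and "1 < (1 + s) * (1 + 2 * 1 + (1 + s) ^ 1)"
    and "1 < (1 + s) * (1 + 2 * (1 - s) + (1 + s) ^ 2)"
    and "1 < (1 + s) * (1 + 2 * (1 - 3 * s) + (1 + s) ^ 3)"
    and "1 < (1 + s) * (1 + 2 * (1 - 6 * s + s\<^sup>2) + (1 + s) ^ 4)"
    and "1 < (1 + s) * (1 + 2 * (1 - 10 * s + 5 * s\<^sup>2) + (1 + s) ^ 5)"
    and "1 < (1 + s) * (1 + 2 * (1 - 15 * s + 15 * s\<^sup>2 - s ^ 3) + (1 + s) ^ 6)"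
proof -
  have factor: "1 < (1 + s) * q" if "q - 1 = c" "0 < c" for q c
    using that mult_nonneg_nonneg[OF assms, of q] by (simp add: distrib_right)
  show "1 < (1 + s) * (1 + 2 * 1 + (1 + s) ^ 0)"
    by (rule factor[of _ 3]) simp_all
  show "1 < (1 + s) * (1 + 2 * 1 + (1 + s) ^ 1)"
    using assms by (intro factor[of _ "3 + s"]) simp_all
  show "1 < (1 + s) * (1 + 2 * (1 - s) + (1 + s) ^ 2)"
    by (rule factor[of _ "3 + s\<^sup>2"]) (simp add: algebra_simps power2_eq_square, intro add_pos_nonneg, simp_all)
  show "1 < (1 + s) * (1 + 2 * (1 - 3 * s) + (1 + s) ^ 3)"
    by (rule factor[of _ "9/4 + 3 * (s - 1/2)\<^sup>2 + s ^ 3"])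
      (simp add: algebra_simps power2_eq_square eval_nat_numeral, intro add_pos_nonneg, simp_all add: assms)
  show "1 < (1 + s) * (1 + 2 * (1 - 6 * s + s\<^sup>2) + (1 + s) ^ 4)"
    by (rule factor[of _ "1 + 8 * (s - 1/2)\<^sup>2 + 4 * s ^ 3 + s ^ 4"])
      (simp add: algebra_simps power2_eq_square eval_nat_numeral, intro add_pos_nonneg, simp_all add: assms)
  show "1 < (1 + s) * (1 + 2 * (1 - 10 * s + 5 * s\<^sup>2) + (1 + s) ^ 5)"
    by (rule factor[of _ "3/16 + 20 * (s - 3/8)\<^sup>2 + 10 * s ^ 3 + 5 * s ^ 4 + s ^ 5"])
      (simp add: algebra_simps power2_eq_square eval_nat_numeral, intro add_pos_nonneg, simp_all add: assms)
  have "(1 + s) * (1 + 2 * (1 - 15 * s + 15 * s\<^sup>2 - s ^ 3) + (1 + s) ^ 6) - 1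
      = 14591/53760 + 105/2 * (s - 383/1680)\<^sup>2 + 63 * s * (s - 1/4)\<^sup>2
        + 33 * s ^ 4 + 21 * s ^ 5 + 7 * s ^ 6 + s ^ 7"
    by (simp add: algebra_simps power2_eq_square eval_nat_numeral)
  moreover have "0 < \<dots>"
    by (intro add_pos_nonneg) (simp_all add: assms)
  ultimately show "1 < (1 + s) * (1 + 2 * (1 - 15 * s + 15 * s\<^sup>2 - s ^ 3) + (1 + s) ^ 6)"
    by linarith
qed

lemma one_lt_norm_Complex_one_mult_small_k:
  assumes "k \<le> 6"
  shows "1 < cmod (Complex 1 t) * cmod (1 + Complex 1 t ^ k)"
proof -
  note bounds = small_k_polynomials_gt_one[of "t\<^sup>2", OF zero_le_power2]
  consider "k = 0" | "k = 1" | "k = 2" | "k = 3" | "k = 4" | "k = 5" | "k = 6"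
    using assms by linarith
  then have "1 < (1 + t\<^sup>2) * (1 + 2 * Re (Complex 1 t ^ k) + (1 + t\<^sup>2) ^ k)"
    by cases (simp_all only: Re_Complex_one_power bounds)
  also have "\<dots> = (cmod (Complex 1 t))\<^sup>2 * (cmod (1 + Complex 1 t ^ k))\<^sup>2"
    unfolding norm_one_plus_square norm_power power_mult[symmetric] mult.commute[of k]
    by (simp add: power_mult cmod_power2)
  also have "\<dots> = (cmod (Complex 1 t) * cmod (1 + Complex 1 t ^ k))\<^sup>2"
    by (simp add: power_mult_distrib)
  finally show ?thesis
    by (metis power_less_imp_less_base one_power2 norm_ge_zero mult_nonneg_nonneg)
qed

lemma one_lt_norm_root_equation_small_k:
  fixes w :: complex
  assumes "1 < Re w" "k \<le> 6" "1 \<le> m"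
  shows "1 < cmod (w ^ m * (1 + w ^ k))"
proof -
  define a t where "a = Re w" and "t = Im w / Re w"
  have a: "1 < a"
    using assms(1) by (simp add: a_def)
  have w: "w = of_real a * Complex 1 t"
    using a by (simp add: complex_eq_iff a_def t_def)
  have u: "1 \<le> cmod (Complex 1 t)"
    by (simp add: cmod_def)
  have "1 \<le> cmod w"
    using assms(1) complex_Re_le_cmod[of w] by linarith
  have "1 < cmod (Complex 1 t) * cmod (1 + Complex 1 t ^ k)"
    using assms(2) by (rule one_lt_norm_Complex_one_mult_small_k)
  also have "\<dots> \<le> cmod w * cmod (1 + w ^ k)"
  proof (rule mult_mono)
    show "cmod (Complex 1 t) \<le> cmod w"
      using a mult_right_mono[of 1 a "cmod (Complex 1 t)"] by (simp add: w norm_mult)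
    have "cmod (1 + Complex 1 t ^ k) \<le> cmod (1 + of_real (a ^ k) * Complex 1 t ^ k)"
      using a u by (intro norm_one_plus_le_norm_one_plus_scaled) (auto simp: norm_power one_le_power)
    then show "cmod (1 + Complex 1 t ^ k) \<le> cmod (1 + w ^ k)"
      by (simp add: w power_mult_distrib)
  qed simp_all
  also have "\<dots> \<le> cmod w ^ m * cmod (1 + w ^ k)"
    using assms(3) \<open>1 \<le> cmod w\<close> power_increasing[of 1 m "cmod w"]
    by (intro mult_right_mono) auto
  finally show ?thesis
    by (simp add: norm_mult norm_power)
qed

lemma norm_power_sub_one_le:
  fixes w :: "'a::real_normed_algebra_1"
  shows "norm (w ^ n - 1) \<le> (1 + norm (w - 1)) ^ n - 1"
proof (induction n)
  case 0
  then show ?case by simp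
next
  case (Suc n)
  define d where "d = norm (w - 1)"
  have w: "norm w \<le> 1 + d"
    using norm_triangle_ineq[of 1 "w - 1"] by (simp add: d_def)
  have "w ^ Suc n - 1 = w * (w ^ n - 1) + (w - 1)"
    by (simp add: algebra_simps)
  then have "norm (w ^ Suc n - 1) \<le> norm (w * (w ^ n - 1)) + d"
    unfolding d_def by (metis norm_triangle_ineq)
  also have "\<dots> \<le> norm w * norm (w ^ n - 1) + d"
    by (simp add: norm_mult_ineq)
  also have "\<dots> \<le> (1 + d) * ((1 + d) ^ n - 1) + d"
    using Suc w by (intro add_right_mono mult_mono) (auto simp: d_def)
  also have "\<dots> = (1 + d) ^ Suc n - 1"
    by (simp add: algebra_simps)
  finally show ?case
    by (simp add: d_def)
qed

lemma exp_one_third_lt_two: "exp (1/3 :: real) < 2"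
proof -
  have "2/3 \<le> exp (-1/3 :: real)"
    using exp_ge_add_one_self[of "-1/3 :: real"] by simp
  then have "exp (1/3 :: real) * (2/3) \<le> exp (1/3) * exp (-1/3)"
    by (intro mult_left_mono) auto
  then show ?thesis
    by (simp flip: exp_add)
qed

lemma norm_sub_one_gt_if_norm_power_sub_one_gt:
  fixes w :: "'a::real_normed_algebra_1"
  assumes "1 \<le> k" "1 < norm (w ^ k - 1)"
  shows "1 / (3 * real k) < norm (w - 1)"
proof (rule ccontr)
  define d where "d = norm (w - 1)"
  assume "\<not> 1 / (3 * real k) < norm (w - 1)"
  then have "real k * d \<le> 1/3"
    using assms(1) by (simp add: d_def field_simps)
  have "2 < (1 + d) ^ k"
    using assms(2) norm_power_sub_one_le[of w k] by (simp add: d_def)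
  also have "\<dots> \<le> exp d ^ k"
    by (intro power_mono) (auto simp: d_def)
  also have "\<dots> = exp (real k * d)"
    by (simp add: exp_of_nat_mult)
  also have "\<dots> \<le> exp (1/3)"
    using \<open>real k * d \<le> 1/3\<close> by simp
  finally show False
    using exp_one_third_lt_two by simp
qed

context
  fixes w :: complex and m k :: nat
  assumes root: "w ^ m * (1 + w ^ k) = 1" and outside: "1 < cmod w"
begin

lemma root_excess_bound:
  assumes "1 \<le> k"
  shows "real m * (cmod w - 1)\<^sup>2 < 1"
proof -
  define e where "e = cmod w - 1"
  have e: "0 < e"
    using outside by (simp add: e_def)
  have "1 + real m * e \<le> cmod w ^ m"
    using Bernoulli_inequality[of e m] e by (simp add: e_def)
  moreover have "e \<le> cmod (1 + w ^ k)"
  proof -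
    have "cmod w \<le> cmod w ^ k"
      using outside assms power_increasing[of 1 k "cmod w"] by simp
    also have "\<dots> - 1 \<le> cmod (1 + w ^ k)"
      using norm_triangle_ineq4[of "1 + w ^ k" 1] by (simp add: norm_power)
    finally show ?thesis
      by (simp add: e_def)
  qed
  ultimately have "(1 + real m * e) * e \<le> cmod w ^ m * cmod (1 + w ^ k)"
    using e by (intro mult_mono) auto
  also have "\<dots> = 1"
    using arg_cong[OF root, of cmod] by (simp add: norm_mult norm_power)
  finally show ?thesis
    using e by (simp add: e_def[symmetric] algebra_simps power2_eq_square)
qed

lemma root_norm_power_sub_one_gt:
  assumes "1 \<le> m"
  shows "1 < cmod (w ^ k - 1)"
proof -
  have "1 < cmod w ^ m"
    using outside assms by (simp add: one_less_power)
  moreover have "cmod w ^ m * cmod (1 + w ^ k) = 1"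
    using arg_cong[OF root, of cmod] by (simp add: norm_mult norm_power)
  ultimately have "cmod (1 + w ^ k) < 1"
    using mult_left_mono[of 1 "cmod (1 + w ^ k)" "cmod w ^ m"] by fastforce
  moreover have "2 \<le> cmod (1 + w ^ k) + cmod (w ^ k - 1)"
    using norm_triangle_ineq4[of "1 + w ^ k" "w ^ k - 1"] by simp
  ultimately show ?thesis
    by linarith
qed

end

lemma norm_sub_one_square_lt:
  fixes w :: complex
  assumes "1 < Re w"
  shows "(cmod (w - 1))\<^sup>2 < (cmod w)\<^sup>2 - 1"
  using assms unfolding cmod_power2 by (simp add: power2_eq_square algebra_simps)

lemma no_root_equation_large_m:
  fixes w :: complex
  assumes "1 < Re w" "1 \<le> k" "729 * k ^ 4 < m"
  shows "w ^ m * (1 + w ^ k) \<noteq> 1"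
proof
  assume root: "w ^ m * (1 + w ^ k) = 1"
  define e where "e = cmod w - 1"
  define x :: real where "x = 1 / (3 * real k)"
  have outside: "1 < cmod w"
    using assms(1) complex_Re_le_cmod[of w] by linarith
  have m: "1 \<le> m" and k: "1 \<le> real k"
    using assms(2,3) by simp_all
  have m_large: "729 * real k ^ 4 < real m"
    using assms(3) by (metis of_nat_less_iff of_nat_mult of_nat_power of_nat_numeral)
  have "real m * e\<^sup>2 < 1"
    using root_excess_bound[OF root outside assms(2)] by (simp add: e_def)
  have "x < cmod (w - 1)"
    unfolding x_def
    by (intro norm_sub_one_gt_if_norm_power_sub_one_gt assms(2) root_norm_power_sub_one_gt[OF root outside m])
  then have "x\<^sup>2 < e * (e + 2)"
    using norm_sub_one_square_lt[OF assms(1)] power_strict_mono[of x "cmod (w - 1)" 2]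
    by (simp add: x_def e_def algebra_simps power2_eq_square)
  have "x\<^sup>2 / 3 < e"
  proof (cases "e < 1")
    case True
    then show ?thesis
      using \<open>x\<^sup>2 < e * (e + 2)\<close> mult_left_mono[of "e + 2" 3 e] outside by (simp add: e_def)
  next
    case False
    have "x\<^sup>2 \<le> (1/3)\<^sup>2"
      using k by (intro power_mono) (auto simp: x_def field_simps)
    with False show ?thesis
      by (simp add: power2_eq_square)
  qed
  then have "(x\<^sup>2 / 3)\<^sup>2 < e\<^sup>2"
    by (intro power_strict_mono) auto
  then have "real m * (x\<^sup>2 / 3)\<^sup>2 < real m * e\<^sup>2"
    using m by (intro mult_strict_left_mono) auto
  moreover have "1 < real m * (x\<^sup>2 / 3)\<^sup>2"
    using m_large k by (simp add: x_def field_simps eval_nat_numeral)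
  ultimately show False
    using \<open>real m * e\<^sup>2 < 1\<close> by linarith
qed

theorem theorem3:
  shows "(\<forall>k m :: nat. k \<le> 6 \<longrightarrow> m \<ge> 1 \<longrightarrow> stable (Kbip_V m (m + k)) Kbip_E)
       \<and> (\<forall>k :: nat. k \<ge> 7 \<longrightarrow>
            (\<exists>N :: int. \<forall>m :: nat. int m > N \<longrightarrow> stable (Kbip_V m (m + k)) Kbip_E))"
proof (intro conjI allI impI)
  fix k m :: nat
  assume "k \<le> 6" "m \<ge> 1"
  then show "stable (Kbip_V m (m + k)) Kbip_E"
    using one_lt_norm_root_equation_small_k by (intro stable_Kbip_if_no_root) force
next
  fix k :: nat
  assume "k \<ge> 7"
  have "stable (Kbip_V m (m + k)) Kbip_E" if "int m > 729 * int k ^ 4" for m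
  proof (intro stable_Kbip_if_no_root no_root_equation_large_m)
    show "729 * k ^ 4 < m"
      using that by (metis of_nat_less_iff of_nat_mult of_nat_power of_nat_numeral)
  qed (use \<open>k \<ge> 7\<close> in simp_all)
  then show "\<exists>N :: int. \<forall>m :: nat. int m > N \<longrightarrow> stable (Kbip_V m (m + k)) Kbip_E"
    by blast
qed

end
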